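(* Let $d\geq 7$ and let $f\in C^\infty([0,\infty))$ solve $$f''+\left(\frac{d-1}{y}-\frac{y}{2}\right)f'-\frac{d-1}{2y^2}\sin(2f)=0\quad (y>0)$$ with $f(0)=0$ and $f'(0)=a>0$. Let $h(y)=y^3f'(y)$. Then $h'(y)>0$ for all $y>0$, and $\lim_{y\to\infty}h(y)=+\infty$. *)

theory Defs
  imports Complex_Main
begin

text \<open>D is a tower of derivatives of f on the closed half-line [0,infinity)
  (one-sided derivative at 0); its existence means f is C-infinity there.\<close>
definition deriv_tower_halfline :: "(nat \<Rightarrow> real \<Rightarrow> real) \<Rightarrow> (real \<Rightarrow> real) \<Rightarrow> bool" where
  "deriv_tower_halfline D f \<longleftrightarrow> D 0 = f \<and>
     (\<forall>n x. x \<ge> 0 \<longrightarrow> (D n has_real_derivative D (Suc n) x) (at x within {0..}))"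

end

theory Submission
  imports Defs "HOL-Analysis.Analysis" "HOL-Real_Asymp.Real_Asymp"
begin

text \<open>
  Eliminating \<open>f''\<close> with the ODE gives
  \<open>h' = K\<close> for an explicit expression \<open>K\<close> in \<open>y, f, f'\<close>, and \<open>K\<close> itself satisfies
  \<open>K' = ((5-d)/y + y/2) K + y f' (2(d-4) + (d-1) cos 2f)\<close>.  With the integrating factor
  \<open>E(y) = y^(d-5) exp(-y\<^sup>2/4)\<close> this becomes \<open>(E K)' = E y f' (2(d-4) + (d-1) cos 2f)\<close>, whose
  right-hand side is \<open>\<ge> 0\<close> wherever \<open>f' \<ge> 0\<close> because \<open>2(d-4) - (d-1) = d - 7 \<ge> 0\<close>.

  The locale
  \<open>profile_solution\<close> collects the hypotheses on a solution; there \<open>K > 0\<close> near \<open>0\<close> (as \<open>f' > 0\<close>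
  and \<open>cos 2f > 0\<close>), hence on all of \<open>(0,\<infinity>)\<close>, hence \<open>h > 0\<close>, so \<open>E K \<ge> c > 0\<close> for large
  \<open>y\<close>; since \<open>E \<rightarrow> 0\<close> this forces \<open>K \<rightarrow> \<infinity>\<close> and therefore \<open>h \<rightarrow> \<infinity>\<close>.
\<close>

lemma mono_of_deriv_nonneg:
  fixes M Q :: "real \<Rightarrow> real" and a b :: real
  assumes M_deriv: "\<And>x. a \<le> x \<Longrightarrow> x \<le> b \<Longrightarrow> (M has_real_derivative Q x) (at x)"
    and Q_nonneg: "\<And>x. a < x \<Longrightarrow> x < b \<Longrightarrow> Q x \<ge> 0"
    and "a \<le> b"
  shows "M a \<le> M b"
proof (rule DERIV_nonneg_imp_increasing_open[OF \<open>a \<le> b\<close>])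
  show "continuous_on {a..b} M"
    using M_deriv by (intro continuous_at_imp_continuous_on ballI DERIV_isCont) auto
next
  fix x assume "a < x" "x < b"
  then show "\<exists>l. (M has_real_derivative l) (at x) \<and> l \<ge> 0"
    using M_deriv[of x] Q_nonneg[of x] by auto
qed

text \<open>Growth transfer: if the derivative of \<open>h\<close> tends to infinity, so does \<open>h\<close>.
  Eventually \<open>h' \<ge> 1\<close>, and the mean value theorem gives linear growth.\<close>
lemma at_top_of_deriv_at_top:
  fixes h K :: "real \<Rightarrow> real"
  assumes h_deriv: "\<And>x. x > 0 \<Longrightarrow> (h has_real_derivative K x) (at x)"
    and K_lim: "filterlim K at_top at_top"
  shows "filterlim h at_top at_top"
proof -
  obtain Y where Y: "\<And>x. x \<ge> Y \<Longrightarrow> K x \<ge> 1"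
    using K_lim unfolding filterlim_at_top eventually_at_top_linorder by blast
  define Y' where "Y' = max 1 Y"
  have linear_growth: "h Y' + (y - Y') \<le> h y" if "y \<ge> Y'" for y
  proof -
    have "h Y' - Y' \<le> h y - y"
    proof (rule mono_of_deriv_nonneg[OF _ _ that])
      fix x assume "Y' \<le> x"
      then show "((\<lambda>t. h t - t) has_real_derivative K x - 1) (at x)"
        unfolding Y'_def by (intro derivative_intros h_deriv) auto
    next
      fix x assume "Y' < x"
      then show "K x - 1 \<ge> 0" using Y[of x] unfolding Y'_def by auto
    qed
    then show ?thesis by simp
  qed
  have "filterlim (\<lambda>y. h Y' + (y - Y')) at_top at_top"
    by real_asymp
  moreover have "\<forall>\<^sub>F y in at_top. h Y' + (y - Y') \<le> h y"
    using linear_growth by (auto simp: eventually_at_top_linorder)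
  ultimately show ?thesis by (rule filterlim_at_top_mono)
qed

lemma pos_of_deriv_pos:
  fixes h K :: "real \<Rightarrow> real"
  assumes h_deriv: "\<And>x. x > 0 \<Longrightarrow> (h has_real_derivative K x) (at x)"
    and h_cont: "continuous_on {0..} h" and h0: "h 0 = 0"
    and "z > 0" and K_pos: "\<And>x. 0 < x \<Longrightarrow> x < z \<Longrightarrow> K x > 0"
  shows "h z > 0"
proof -
  have "h 0 < h z"
  proof (rule DERIV_pos_imp_increasing_open[OF \<open>z > 0\<close>])
    fix x assume "0 < x" "x < z"
    then show "\<exists>l. (h has_real_derivative l) (at x) \<and> l > 0"
      using h_deriv[of x] K_pos[of x] by auto
  qed (use continuous_on_subset[OF h_cont] in auto)
  then show ?thesis using h0 by simp
qed

text \<open>If \<open>K > 0\<close> on an initial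
  interval \<open>(0, \<delta>]\<close>, then \<open>K > 0\<close> everywhere: at a first zero \<open>y\<^sub>0\<close> of \<open>K\<close> we would have
  \<open>h > 0\<close> on \<open>(0, y\<^sub>0)\<close>, hence \<open>E(y\<^sub>0) K(y\<^sub>0) \<ge> E(\<delta>) K(\<delta>) > 0\<close>.\<close>
lemma derivative_stays_positive:
  fixes h K E Q :: "real \<Rightarrow> real" and \<delta> :: real
  assumes h_deriv: "\<And>x. x > 0 \<Longrightarrow> (h has_real_derivative K x) (at x)"
    and h_cont: "continuous_on {0..} h" and h0: "h 0 = 0"
    and E_pos: "\<And>x. x > 0 \<Longrightarrow> E x > 0"
    and M_deriv: "\<And>x. x > 0 \<Longrightarrow> ((\<lambda>x. E x * K x) has_real_derivative Q x) (at x)"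
    and Q_nonneg: "\<And>x. x > 0 \<Longrightarrow> h x > 0 \<Longrightarrow> Q x \<ge> 0"
    and \<delta>: "\<delta> > 0" and K_init: "\<And>x. 0 < x \<Longrightarrow> x \<le> \<delta> \<Longrightarrow> K x > 0"
    and y: "y > 0"
  shows "K y > 0"
proof (rule ccontr)
  assume "\<not> K y > 0"
  define T where "T = {x \<in> {\<delta>..}. E x * K x \<le> 0}"
  have "y \<in> T"
    using \<open>\<not> K y > 0\<close> K_init[OF y] E_pos[OF y] unfolding T_def
    by (force simp: mult_le_0_iff not_less)
  have M_cont: "continuous_on {\<delta>..} (\<lambda>x. E x * K x)"
    using DERIV_isCont[OF M_deriv] \<delta> by (intro continuous_at_imp_continuous_on) auto
  have "closed T" unfolding T_def
    by (intro continuous_on_closed_Collect_le M_cont continuous_on_const) auto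
  moreover have "bdd_below T" unfolding T_def by (auto intro: bdd_belowI[of _ \<delta>])
  ultimately have "Inf T \<in> T" using closed_contains_Inf \<open>y \<in> T\<close> by blast
  define y0 where "y0 = Inf T"
  have y0: "y0 \<ge> \<delta>" "E y0 * K y0 \<le> 0"
    using \<open>Inf T \<in> T\<close> unfolding y0_def T_def by auto
  have K_below: "K x > 0" if "0 < x" "x < y0" for x
  proof (cases "x \<le> \<delta>")
    case False
    have "x \<notin> T"
      using that \<open>bdd_below T\<close> cInf_lower[of x T] unfolding y0_def by force
    then show ?thesis
      using False E_pos[of x] that unfolding T_def by (auto simp: not_le zero_less_mult_iff)
  qed (use K_init that in auto)
  have h_below: "h x > 0" if "0 < x" "x < y0" for x
    using pos_of_deriv_pos[OF h_deriv h_cont h0 \<open>0 < x\<close>] K_below that by simp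
  have "E \<delta> * K \<delta> \<le> E y0 * K y0"
  proof (rule mono_of_deriv_nonneg[OF _ _ \<open>y0 \<ge> \<delta>\<close>])
    fix x assume "\<delta> \<le> x"
    then show "((\<lambda>x. E x * K x) has_real_derivative Q x) (at x)" using M_deriv \<delta> by simp
  qed (use \<delta> Q_nonneg h_below in auto)
  moreover have "E \<delta> * K \<delta> > 0" using E_pos[OF \<delta>] K_init[OF \<delta> order_refl] by simp
  ultimately show False using y0 by simp
qed

lemma at_top_of_weighted_lower_bound:
  fixes E K :: "real \<Rightarrow> real" and c :: real
  assumes E_lim: "(E \<longlongrightarrow> 0) at_top" and E_pos: "\<forall>\<^sub>F y in at_top. E y > 0"
    and "c > 0" and bound: "\<forall>\<^sub>F y in at_top. c \<le> E y * K y"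
  shows "filterlim K at_top at_top"
proof -
  have "filterlim (\<lambda>y. c * inverse (E y)) at_top at_top"
    by (intro filterlim_tendsto_pos_mult_at_top[OF tendsto_const \<open>c > 0\<close>]
        filterlim_inverse_at_top E_lim E_pos)
  moreover have "\<forall>\<^sub>F y in at_top. c * inverse (E y) \<le> K y"
    using E_pos bound by eventually_elim (simp add: field_simps)
  ultimately show ?thesis by (rule filterlim_at_top_mono)
qed

lemma eventually_pos_at_right_0:
  fixes g :: "real \<Rightarrow> real"
  assumes "continuous_on {0..} g" and "g 0 > 0"
  shows "\<forall>\<^sub>F y in at_right 0. g y > 0"
proof -
  have "(g \<longlongrightarrow> g 0) (at 0 within {0..})"
    using assms(1) by (simp add: continuous_on_def)
  then have "(g \<longlongrightarrow> g 0) (at_right 0)"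
    by (rule tendsto_within_subset) auto
  then show ?thesis using assms(2) by (rule order_tendstoD)
qed

lemma deriv_tower_halfline_at:
  assumes "deriv_tower_halfline D f" and "x > 0"
  shows "(D n has_real_derivative D (Suc n) x) (at x)"
proof -
  have "(D n has_real_derivative D (Suc n) x) (at x within {0..})"
    using assms unfolding deriv_tower_halfline_def by auto
  then have "(D n has_real_derivative D (Suc n) x) (at x within {0<..})"
    by (rule has_field_derivative_subset) auto
  then show ?thesis using assms(2) by (simp add: at_within_open[of x "{0<..}"])
qed

lemma deriv_tower_halfline_continuous:
  assumes "deriv_tower_halfline D f"
  shows "continuous_on {0..} (D n)"
  using assms unfolding deriv_tower_halfline_def
  by (auto intro!: DERIV_continuous simp: continuous_on_eq_continuous_within)

text \<open>The derivative of the flux \<open>h(y) = y\<^sup>3 f'(y)\<close>, rewritten with the ODE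
  \<open>f'' + ((d-1)/y - y/2) f' - (d-1)/(2y\<^sup>2) sin(2f) = 0\<close> so that \<open>f''\<close> no longer occurs.\<close>
definition flux_deriv :: "real \<Rightarrow> (real \<Rightarrow> real) \<Rightarrow> (real \<Rightarrow> real) \<Rightarrow> real \<Rightarrow> real" where
  "flux_deriv d f df y = y\<^sup>2 * df y * (4 - d + y\<^sup>2 / 2) + (d - 1) * (y / 2) * sin (2 * f y)"

lemma flux_has_deriv:
  fixes d y w :: real and f df :: "real \<Rightarrow> real"
  assumes y: "y > 0" and df_deriv: "(df has_real_derivative w) (at y)"
    and ode: "w + ((d - 1) / y - y / 2) * df y - (d - 1) / (2 * y\<^sup>2) * sin (2 * f y) = 0"
  shows "((\<lambda>y. y ^ 3 * df y) has_real_derivative flux_deriv d f df y) (at y)"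
proof -
  have w: "w = - ((d - 1) / y - y / 2) * df y + (d - 1) / (2 * y\<^sup>2) * sin (2 * f y)"
    using ode by linarith
  have "((\<lambda>y. y ^ 3 * df y) has_real_derivative 3 * y\<^sup>2 * df y + y ^ 3 * w) (at y)"
    using df_deriv by (auto intro!: derivative_eq_intros simp: algebra_simps)
  moreover have "3 * y\<^sup>2 * u + y ^ 3 * (- ((d - 1) / y - y / 2) * u + (d - 1) / (2 * y\<^sup>2) * s)
      = y\<^sup>2 * u * (4 - d + y\<^sup>2 / 2) + (d - 1) * (y / 2) * s" for u s
    using y by (simp add: field_simps power2_eq_square power3_eq_cube)
  then have "3 * y\<^sup>2 * df y + y ^ 3 * w = flux_deriv d f df y"
    unfolding w flux_deriv_def .
  ultimately show ?thesis by (rule DERIV_cong)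
qed

lemma flux_deriv_has_deriv:
  fixes d y w :: real and f df :: "real \<Rightarrow> real"
  assumes y: "y > 0" and f_deriv: "(f has_real_derivative df y) (at y)"
    and df_deriv: "(df has_real_derivative w) (at y)"
    and ode: "w + ((d - 1) / y - y / 2) * df y - (d - 1) / (2 * y\<^sup>2) * sin (2 * f y) = 0"
  shows "(flux_deriv d f df has_real_derivative
      ((5 - d) / y + y / 2) * flux_deriv d f df y + y * df y * (2 * (d - 4) + (d - 1) * cos (2 * f y)))
      (at y)"
proof -
  have w: "w = - ((d - 1) / y - y / 2) * df y + (d - 1) / (2 * y\<^sup>2) * sin (2 * f y)"
    using ode by linarith
  have "(flux_deriv d f df has_real_derivative
      (2 * y * df y + y\<^sup>2 * w) * (4 - d + y\<^sup>2 / 2) + y\<^sup>2 * df y * y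
      + (d - 1) * (1 / 2) * sin (2 * f y) + (d - 1) * (y / 2) * (cos (2 * f y) * (2 * df y))) (at y)"
    unfolding flux_deriv_def [abs_def] using f_deriv df_deriv
    by (auto intro!: derivative_eq_intros simp: field_simps power2_eq_square)
  moreover have "(2 * y * df y + y\<^sup>2 * w) * (4 - d + y\<^sup>2 / 2) + y\<^sup>2 * df y * y
      + (d - 1) * (1 / 2) * sin (2 * f y) + (d - 1) * (y / 2) * (cos (2 * f y) * (2 * df y))
    = ((5 - d) / y + y / 2) * flux_deriv d f df y + y * df y * (2 * (d - 4) + (d - 1) * cos (2 * f y))"
  proof -
    have "(2 * y * u + y\<^sup>2 * (- ((d - 1) / y - y / 2) * u + (d - 1) / (2 * y\<^sup>2) * s))
          * (4 - d + y\<^sup>2 / 2) + y\<^sup>2 * u * y + (d - 1) * (1 / 2) * s + (d - 1) * (y / 2) * (c * (2 * u))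
        = ((5 - d) / y + y / 2) * (y\<^sup>2 * u * (4 - d + y\<^sup>2 / 2) + (d - 1) * (y / 2) * s)
          + y * u * (2 * (d - 4) + (d - 1) * c)" for u s c
      using y by (simp add: field_simps power2_eq_square)
    then show ?thesis unfolding w flux_deriv_def .
  qed
  ultimately show ?thesis by (rule DERIV_cong)
qed

text \<open>The Gaussian weight \<open>y^n exp(-y\<^sup>2/4)\<close>; it is an integrating factor for the
  homogeneous part of the equation for \<open>K\<close> when \<open>n = d - 5\<close>.\<close>
definition gauss_weight :: "nat \<Rightarrow> real \<Rightarrow> real" where
  "gauss_weight n y = y ^ n * exp (- (y\<^sup>2 / 4))"

lemma gauss_weight_pos: "y > 0 \<Longrightarrow> gauss_weight n y > 0"
  unfolding gauss_weight_def by simp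

lemma gauss_weight_has_deriv:
  assumes "y \<noteq> 0"
  shows "(gauss_weight n has_real_derivative gauss_weight n y * (real n / y - y / 2)) (at y)"
proof -
  have "(gauss_weight n has_real_derivative
      real n * y ^ (n - 1) * exp (- (y\<^sup>2 / 4)) + y ^ n * (exp (- (y\<^sup>2 / 4)) * (- (2 * y / 4)))) (at y)"
    unfolding gauss_weight_def [abs_def] by (auto intro!: derivative_eq_intros)
  moreover have "real n * y ^ (n - 1) * e + y ^ n * (e * (- (2 * y / 4))) = y ^ n * e * (real n / y - y / 2)" for e
    using assms by (cases n) (simp_all add: field_simps)
  ultimately show ?thesis unfolding gauss_weight_def by simp
qed

lemma gauss_weight_tendsto_zero: "(gauss_weight n \<longlongrightarrow> 0) at_top"
  unfolding gauss_weight_def [abs_def] by real_asymp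

lemma weighted_flux_has_deriv:
  fixes d y w :: real and f df :: "real \<Rightarrow> real"
  assumes n: "real n = d - 5" and y: "y > 0"
    and f_deriv: "(f has_real_derivative df y) (at y)"
    and df_deriv: "(df has_real_derivative w) (at y)"
    and ode: "w + ((d - 1) / y - y / 2) * df y - (d - 1) / (2 * y\<^sup>2) * sin (2 * f y) = 0"
  shows "((\<lambda>y. gauss_weight n y * flux_deriv d f df y) has_real_derivative
      gauss_weight n y * (y * df y * (2 * (d - 4) + (d - 1) * cos (2 * f y)))) (at y)"
proof -
  have "((\<lambda>y. gauss_weight n y * flux_deriv d f df y) has_real_derivative
      gauss_weight n y * (real n / y - y / 2) * flux_deriv d f df y
      + (((5 - d) / y + y / 2) * flux_deriv d f df y
         + y * df y * (2 * (d - 4) + (d - 1) * cos (2 * f y))) * gauss_weight n y) (at y)"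
    using y by (intro DERIV_mult gauss_weight_has_deriv flux_deriv_has_deriv[OF y f_deriv df_deriv ode]) auto
  moreover have "E * (real n / y - y / 2) * K + (((5 - d) / y + y / 2) * K + S) * E = E * S" for E K S
  proof -
    have "d = real n + 5" using n by simp
    then show ?thesis using y by (simp add: field_simps)
  qed
  ultimately show ?thesis by simp
qed

lemma gauss_weight_continuous: "continuous_on S (gauss_weight n)"
  unfolding gauss_weight_def [abs_def] by (intro continuous_intros) auto

lemma flux_deriv_continuous:
  assumes "continuous_on {0..} f" and "continuous_on {0..} df"
  shows "continuous_on {0..} (flux_deriv d f df)"
  unfolding flux_deriv_def [abs_def] by (intro continuous_intros assms) auto

text \<open>For \<open>d \<ge> 7\<close> the source term \<open>y f' (2(d-4) + (d-1) cos(2f))\<close> of the weighted equation is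
  nonnegative wherever \<open>f' \<ge> 0\<close>, since \<open>2(d-4) - (d-1) = d - 7\<close>.\<close>
lemma flux_source_nonneg:
  fixes d t u y :: real
  assumes "d \<ge> 7" and "y \<ge> 0" and "u \<ge> 0"
  shows "y * u * (2 * (d - 4) + (d - 1) * cos t) \<ge> 0"
proof -
  have "(d - 1) * cos t \<ge> (d - 1) * (-1)"
    using assms(1) by (intro mult_left_mono) auto
  then show ?thesis using assms by (intro mult_nonneg_nonneg) auto
qed

locale profile_solution =
  fixes d :: nat and f df ddf :: "real \<Rightarrow> real"
  assumes dim: "d \<ge> 7"
    and f_cont: "continuous_on {0..} f" and df_cont: "continuous_on {0..} df"
    and f_deriv: "\<And>y. y > 0 \<Longrightarrow> (f has_real_derivative df y) (at y)"
    and df_deriv: "\<And>y. y > 0 \<Longrightarrow> (df has_real_derivative ddf y) (at y)"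
    and ode: "\<And>y. y > 0 \<Longrightarrow>
      ddf y + ((real d - 1) / y - y / 2) * df y - (real d - 1) / (2 * y\<^sup>2) * sin (2 * f y) = 0"
    and f0: "f 0 = 0" and df0: "df 0 > 0"
begin

abbreviation flux :: "real \<Rightarrow> real" where "flux \<equiv> \<lambda>y. y ^ 3 * df y"
abbreviation K :: "real \<Rightarrow> real" where "K \<equiv> flux_deriv (real d) f df"
abbreviation E :: "real \<Rightarrow> real" where "E \<equiv> gauss_weight (d - 5)"

lemma weight_exponent: "real (d - 5) = real d - 5"
  using dim by simp

lemma flux_has_deriv_K: "y > 0 \<Longrightarrow> (flux has_real_derivative K y) (at y)"
  using flux_has_deriv df_deriv ode by blast

lemma flux_cont: "continuous_on {0..} flux"
  by (intro continuous_intros df_cont)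

lemma weighted_K_deriv: "y > 0 \<Longrightarrow> ((\<lambda>y. E y * K y) has_real_derivative
    E y * (y * df y * (2 * (real d - 4) + (real d - 1) * cos (2 * f y)))) (at y)"
  using weighted_flux_has_deriv[OF weight_exponent] f_deriv df_deriv ode by blast

lemma weighted_K_source_nonneg:
  assumes "y > 0" and "flux y > 0"
  shows "E y * (y * df y * (2 * (real d - 4) + (real d - 1) * cos (2 * f y))) \<ge> 0"
proof -
  have "df y > 0" using assms by (simp add: zero_less_mult_iff)
  then show ?thesis using assms dim
    by (intro mult_nonneg_nonneg less_imp_le[OF gauss_weight_pos] flux_source_nonneg) auto
qed

text \<open>Near the origin the flux derivative is positive: there \<open>f' > 0\<close> and \<open>cos(2f) > 0\<close>, so the
  weighted flux derivative \<open>E K\<close>, which vanishes at \<open>0\<close>, has a positive derivative.\<close>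
lemma K_pos_near_zero:
  obtains \<delta> where "\<delta> > 0" and "\<And>y. 0 < y \<Longrightarrow> y \<le> \<delta> \<Longrightarrow> K y > 0"
proof -
  have "continuous_on {0..} (\<lambda>y. cos (2 * f y))"
    by (intro continuous_intros f_cont)
  then have "\<forall>\<^sub>F y in at_right 0. df y > 0 \<and> cos (2 * f y) > 0"
    using eventually_pos_at_right_0[OF df_cont df0] eventually_pos_at_right_0 f0
    by (auto intro: eventually_conj)
  then obtain b where "b > 0" and near: "\<And>y. 0 < y \<Longrightarrow> y < b \<Longrightarrow> df y > 0 \<and> cos (2 * f y) > 0"
    unfolding eventually_at_right_field by auto
  have EK_pos: "E y * K y > 0" if "0 < y" "y \<le> b / 2" for y
  proof -
    have "E 0 * K 0 < E y * K y"
    proof (rule DERIV_pos_imp_increasing_open[OF \<open>0 < y\<close>])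
      fix x assume x: "0 < x" "x < y"
      have "2 * (real d - 4) + (real d - 1) * cos (2 * f x) > 0"
        using near[of x] x that dim by (intro add_pos_pos mult_pos_pos) auto
      then have "E x * (x * df x * (2 * (real d - 4) + (real d - 1) * cos (2 * f x))) > 0"
        using near[of x] x that gauss_weight_pos[of x] by simp
      then show "\<exists>l. ((\<lambda>y. E y * K y) has_real_derivative l) (at x) \<and> l > 0"
        using weighted_K_deriv[OF x(1)] by blast
    next
      show "continuous_on {0..y} (\<lambda>y. E y * K y)"
        by (intro continuous_on_mult gauss_weight_continuous
            continuous_on_subset[OF flux_deriv_continuous[OF f_cont df_cont]]) auto
    qed
    then show ?thesis by (simp add: flux_deriv_def)
  qed
  show ?thesis
  proof
    show "b / 2 > 0" using \<open>b > 0\<close> by simp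
    fix y assume "0 < y" "y \<le> b / 2"
    then show "K y > 0"
      using EK_pos[of y] gauss_weight_pos[of y "d - 5"] by (simp add: zero_less_mult_iff)
  qed
qed

lemma K_pos:
  assumes "y > 0"
  shows "K y > 0"
proof -
  obtain \<delta> where \<delta>: "\<delta> > 0" and K_init: "\<And>y. 0 < y \<Longrightarrow> y \<le> \<delta> \<Longrightarrow> K y > 0"
    using K_pos_near_zero by blast
  show ?thesis
    by (rule derivative_stays_positive[OF flux_has_deriv_K flux_cont _ gauss_weight_pos
          weighted_K_deriv weighted_K_source_nonneg \<delta> K_init assms]) simp_all
qed

lemma flux_pos:
  assumes "y > 0"
  shows "flux y > 0"
  by (rule pos_of_deriv_pos[OF flux_has_deriv_K flux_cont _ assms K_pos]) simp_all

text \<open>Since \<open>E K\<close> is nondecreasing on \<open>(0,\<infinity>)\<close> and \<open>E \<rightarrow> 0\<close>, the derivative \<open>K\<close> tends to infinity.\<close>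
lemma K_at_top: "filterlim K at_top at_top"
proof (rule at_top_of_weighted_lower_bound[OF gauss_weight_tendsto_zero])
  show "\<forall>\<^sub>F y in at_top. E y > 0"
    using eventually_gt_at_top[of 0] by eventually_elim (rule gauss_weight_pos)
  show "E 1 * K 1 > 0" using gauss_weight_pos[of 1] K_pos[of 1] by simp
  have "E 1 * K 1 \<le> E y * K y" if "y \<ge> 1" for y
  proof (rule mono_of_deriv_nonneg[OF weighted_K_deriv _ that])
    fix x :: real assume "1 < x"
    then show "E x * (x * df x * (2 * (real d - 4) + (real d - 1) * cos (2 * f x))) \<ge> 0"
      using weighted_K_source_nonneg flux_pos by simp
  qed simp
  then show "\<forall>\<^sub>F y in at_top. E 1 * K 1 \<le> E y * K y"
    unfolding eventually_at_top_linorder by blast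
qed

end

theorem mainTheorem4:
  fixes d :: nat and f :: "real \<Rightarrow> real" and D :: "nat \<Rightarrow> real \<Rightarrow> real" and a :: real
  assumes d: "d \<ge> 7"
    and smooth: "deriv_tower_halfline D f"
    and ode: "\<And>y. y > 0 \<Longrightarrow>
       D 2 y + ((real d - 1) / y - y / 2) * D 1 y - (real d - 1) / (2 * y\<^sup>2) * sin (2 * f y) = 0"
    and f0: "f 0 = 0"
    and fd0: "D 1 0 = a"
    and apos: "a > 0"
  shows "(\<forall>y>0. \<exists>h'. ((\<lambda>y. y ^ 3 * D 1 y) has_real_derivative h') (at y) \<and> h' > 0) \<and>
         filterlim (\<lambda>y. y ^ 3 * D 1 y) at_top at_top"
proof -
  have "D 0 = f" using smooth by (simp add: deriv_tower_halfline_def)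
  interpret profile_solution d f "D 1" "D 2"
  proof
    show "continuous_on {0..} f" "continuous_on {0..} (D 1)"
      using deriv_tower_halfline_continuous[OF smooth] \<open>D 0 = f\<close> by metis+
    show "(f has_real_derivative D 1 y) (at y)" if "y > 0" for y
      using deriv_tower_halfline_at[OF smooth that, of 0] \<open>D 0 = f\<close> by simp
    show "(D 1 has_real_derivative D 2 y) (at y)" if "y > 0" for y
      using deriv_tower_halfline_at[OF smooth that, of 1] by (simp add: numeral_2_eq_2)
  qed (use d ode f0 fd0 apos in auto)
  show ?thesis
    using flux_has_deriv_K K_pos at_top_of_deriv_at_top[OF flux_has_deriv_K K_at_top] by blast
qed

end
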